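(* The variety $\mathsf{V}(S_{(4,474)})$ is the ai-semiring variety defined by the identities $xy\approx yx$, $x^2y\approx xy$, $xy\approx xy+xyz$.
   Context: An ai-semiring is an algebra $(S,+,\cdot)$ with $(S,+)$ a semilattice, $(S,\cdot)$ a semigroup, and both distributive laws. $\mathsf{V}(S)$ is the variety generated by $S$; "the ai-semiring variety defined by identities $\Sigma$" is the class of all ai-semirings satisfying $\Sigma$. $S_{(4,474)}$ has carrier $\{1,2,3,4\}$; addition: $x+x=x$, $2+x=x$, $1+x=1$ for all $x$, $3+4=1$; multiplication (row $a$, column $b$ gives $a\cdot b$): row $1$: $3,2,3,3$; row $2$: $2,2,2,2$; row $3$: $3,2,3,3$; row $4$: $3,2,3,3$. *)

theory Defs
  imports Main
begin

definition ai_semiring :: "('a \<Rightarrow> 'a \<Rightarrow> 'a) \<Rightarrow> ('a \<Rightarrow> 'a \<Rightarrow> 'a) \<Rightarrow> bool" where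
  "ai_semiring add mul \<longleftrightarrow>
     (\<forall>x. add x x = x) \<and>
     (\<forall>x y. add x y = add y x) \<and>
     (\<forall>x y z. add (add x y) z = add x (add y z)) \<and>
     (\<forall>x y z. mul (mul x y) z = mul x (mul y z)) \<and>
     (\<forall>x y z. mul x (add y z) = add (mul x y) (mul x z)) \<and>
     (\<forall>x y z. mul (add x y) z = add (mul x z) (mul y z))"

datatype trm = Var nat | Plus trm trm | Times trm trm

fun eval :: "('a \<Rightarrow> 'a \<Rightarrow> 'a) \<Rightarrow> ('a \<Rightarrow> 'a \<Rightarrow> 'a) \<Rightarrow> (nat \<Rightarrow> 'a) \<Rightarrow> trm \<Rightarrow> 'a" where
  "eval add mul v (Var n) = v n"
| "eval add mul v (Plus s t) = add (eval add mul v s) (eval add mul v t)"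
| "eval add mul v (Times s t) = mul (eval add mul v s) (eval add mul v t)"

definition satisfies :: "('a \<Rightarrow> 'a \<Rightarrow> 'a) \<Rightarrow> ('a \<Rightarrow> 'a \<Rightarrow> 'a) \<Rightarrow> trm \<Rightarrow> trm \<Rightarrow> bool" where
  "satisfies add mul p q \<longleftrightarrow> (\<forall>v. eval add mul v p = eval add mul v q)"

text \<open>The semiring S_(4,474) on carrier {1,2,3,4}.\<close>
datatype s4 = E1 | E2 | E3 | E4

definition S_add :: "s4 \<Rightarrow> s4 \<Rightarrow> s4" where
  "S_add x y = (if x = y then x else if x = E2 then y else if y = E2 then x else E1)"

definition S_mul :: "s4 \<Rightarrow> s4 \<Rightarrow> s4" where
  "S_mul x y = (if x = E2 \<or> y = E2 then E2 else E3)"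

text \<open>Membership in the variety V(S) generated by S: by Birkhoff's HSP theorem,
  V(S) is exactly the class of algebras satisfying every identity that holds in S.\<close>
definition in_V_S :: "('a \<Rightarrow> 'a \<Rightarrow> 'a) \<Rightarrow> ('a \<Rightarrow> 'a \<Rightarrow> 'a) \<Rightarrow> bool" where
  "in_V_S add mul \<longleftrightarrow> (\<forall>p q. satisfies S_add S_mul p q \<longrightarrow> satisfies add mul p q)"

abbreviation "tx \<equiv> Var 0"
abbreviation "ty \<equiv> Var 1"
abbreviation "tz \<equiv> Var 2"

end

theory Submission
  imports Defs
begin

text \<open>In a commutative ai-semiring with \<open>x\<^sup>2y = xy\<close>, a product of at least two factors depends
  only on the set \<open>A\<close> of variables in it and equals \<open>\<Prod>a\<in>A. a\<^sup>2\<close>; by \<open>xy = xy + xyz\<close> this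
  monomial lies below every monomial over a nonempty subset of \<open>A\<close>. Expanding a term by
  distributivity therefore gives \<open>\<Sum>x\<in>L. x + \<Sum>A\<in>M. \<Prod>a\<in>A. a\<^sup>2\<close>, whose value depends only on
  the set \<open>L\<close> of variables occurring as summands and on the minimal members of \<open>M\<close>.
  Valuations of S(4,474) into \<open>{2, 4}\<close> detect both: a variable of \<open>L\<close> sent to 4 makes the value
  4 or 1, while a monomial all of whose variables are sent to 4 contributes 3, and any monomial
  containing a variable sent to 2 vanishes. So an identity of S(4,474) relates two terms with the
  same \<open>L\<close> and the same minimal members of \<open>M\<close>.\<close>

lemma (in comm_monoid_set) insert_idem:
  assumes "finite A" and "g x \<^bold>* g x = g x"
  shows "F g (insert x A) = g x \<^bold>* F g A"
proof (cases "x \<in> A")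
  case True
  then show ?thesis
    using remove[OF assms(1) True] assms(2) by (simp add: insert_absorb flip: assoc)
qed (simp add: assms(1))

lemma (in comm_monoid_set) union_idem:
  assumes "finite A" and "finite B" and "\<And>x. x \<in> A \<Longrightarrow> g x \<^bold>* g x = g x"
  shows "F g (A \<union> B) = F g A \<^bold>* F g B"
  using assms by (induction A rule: finite_induct) (simp_all add: insert_idem assoc)

definition option_mul :: "('a \<Rightarrow> 'a \<Rightarrow> 'a) \<Rightarrow> 'a option \<Rightarrow> 'a option \<Rightarrow> 'a option" where
  "option_mul f a b =
     (case (a, b) of (Some x, Some y) \<Rightarrow> Some (f x y) | (None, _) \<Rightarrow> b | (_, None) \<Rightarrow> a)"

lemma option_mul_simps [simp]:
  "option_mul f None b = b"
  "option_mul f a None = a"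
  "option_mul f (Some x) (Some y) = Some (f x y)"
  by (simp_all add: option_mul_def split: option.split)

lemma (in abel_semigroup) comm_monoid_option_mul: "comm_monoid (option_mul f) None"
proof
  fix a b c :: "'a option"
  show "option_mul f (option_mul f a b) c = option_mul f a (option_mul f b c)"
    by (cases a; cases b; cases c) (simp_all add: assoc)
  show "option_mul f a b = option_mul f b a"
    by (cases a; cases b) (simp_all add: commute)
qed simp

lemma image_split_Times_image:
  "(\<lambda>(a, b). h a b) ` (f ` A \<times> g ` B) = (\<lambda>(x, y). h (f x) (g y)) ` (A \<times> B)"
  by (auto simp: image_iff)

subsection \<open>Normal forms of terms\<close>

fun supports :: "trm \<Rightarrow> nat set set" where
  "supports (Var n) = {{n}}"
| "supports (Plus s t) = supports s \<union> supports t"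
| "supports (Times s t) = (\<lambda>(A, B). A \<union> B) ` (supports s \<times> supports t)"

fun linear_vars :: "trm \<Rightarrow> nat set" where
  "linear_vars (Var n) = {n}"
| "linear_vars (Plus s t) = linear_vars s \<union> linear_vars t"
| "linear_vars (Times s t) = {}"

fun monomials :: "trm \<Rightarrow> nat set set" where
  "monomials (Var n) = {}"
| "monomials (Plus s t) = monomials s \<union> monomials t"
| "monomials (Times s t) = supports (Times s t)"

lemma supports_eq: "supports t = monomials t \<union> (\<lambda>x. {x}) ` linear_vars t"
  by (induction t) auto

lemma supports_finite_nonempty:
  "finite (supports t) \<and> supports t \<noteq> {} \<and> (\<forall>A\<in>supports t. finite A \<and> A \<noteq> {})"
  by (induction t) auto

lemma finite_linear_vars: "finite (linear_vars t)"
  by (induction t) auto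

lemma finite_monomials: "finite (monomials t)"
  using supports_finite_nonempty[of t] by (simp add: supports_eq)

lemma monomials_finite_nonempty: "A \<in> monomials t \<Longrightarrow> finite A \<and> A \<noteq> {}"
  using supports_finite_nonempty[of t] by (simp add: supports_eq)

definition nf_le :: "trm \<Rightarrow> trm \<Rightarrow> bool" where
  "nf_le p q \<longleftrightarrow> linear_vars p \<subseteq> linear_vars q \<and> (\<forall>A\<in>monomials p. \<exists>B\<in>monomials q. B \<subseteq> A)"

subsection \<open>Evaluation in the variety\<close>

locale s474_semiring =
  fixes add :: "'a \<Rightarrow> 'a \<Rightarrow> 'a" (infixl "\<oplus>" 65)
    and mul :: "'a \<Rightarrow> 'a \<Rightarrow> 'a" (infixl "\<odot>" 70)
  assumes add_idem: "x \<oplus> x = x"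
    and add_commute: "x \<oplus> y = y \<oplus> x"
    and add_assoc: "x \<oplus> y \<oplus> z = x \<oplus> (y \<oplus> z)"
    and mul_assoc: "x \<odot> y \<odot> z = x \<odot> (y \<odot> z)"
    and distrib_left: "x \<odot> (y \<oplus> z) = x \<odot> y \<oplus> x \<odot> z"
    and distrib_right: "(x \<oplus> y) \<odot> z = x \<odot> z \<oplus> y \<odot> z"
    and mul_commute: "x \<odot> y = y \<odot> x"
    and mul_square_left: "x \<odot> x \<odot> y = x \<odot> y"
    and mul_absorb: "x \<odot> y = x \<odot> y \<oplus> x \<odot> y \<odot> z"

lemma satisfies_at:
  "satisfies add mul p q \<Longrightarrow>
     \<forall>x y z. eval add mul (\<lambda>n. [x, y, z] ! n) p = eval add mul (\<lambda>n. [x, y, z] ! n) q"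
  by (simp add: satisfies_def)

lemma ai_semiring_iff_satisfies:
  "ai_semiring add mul \<longleftrightarrow>
     satisfies add mul (Plus tx tx) tx \<and>
     satisfies add mul (Plus tx ty) (Plus ty tx) \<and>
     satisfies add mul (Plus (Plus tx ty) tz) (Plus tx (Plus ty tz)) \<and>
     satisfies add mul (Times (Times tx ty) tz) (Times tx (Times ty tz)) \<and>
     satisfies add mul (Times tx (Plus ty tz)) (Plus (Times tx ty) (Times tx tz)) \<and>
     satisfies add mul (Times (Plus tx ty) tz) (Plus (Times tx tz) (Times ty tz))"
  (is "_ \<longleftrightarrow> ?identities")
proof
  assume "ai_semiring add mul"
  then show ?identities
    unfolding ai_semiring_def satisfies_def eval.simps by blast
qed (auto simp: ai_semiring_def dest!: satisfies_at)

lemma s474_semiring_iff: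
  "s474_semiring add mul \<longleftrightarrow>
     ai_semiring add mul \<and>
     satisfies add mul (Times tx ty) (Times ty tx) \<and>
     satisfies add mul (Times (Times tx tx) ty) (Times tx ty) \<and>
     satisfies add mul (Times tx ty) (Plus (Times tx ty) (Times (Times tx ty) tz))"
  (is "_ \<longleftrightarrow> ?identities")
proof
  assume "s474_semiring add mul"
  then interpret s474_semiring add mul .
  show ?identities
    unfolding ai_semiring_def satisfies_def eval.simps
    by (intro conjI allI) (rule add_idem add_commute add_assoc mul_assoc distrib_left
        distrib_right mul_commute mul_square_left mul_absorb)+
qed (auto simp: s474_semiring_def ai_semiring_def dest!: satisfies_at)

context s474_semiring
begin

sublocale join: semilattice_set "(\<oplus>)"
  by unfold_locales (fact add_assoc add_commute add_idem)+

sublocale mul: abel_semigroup "(\<odot>)"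
  by unfold_locales (fact mul_assoc mul_commute)+

sublocale mprod: comm_monoid_set "option_mul (\<odot>)" None
  by (rule comm_monoid_set.intro) (rule mul.comm_monoid_option_mul)

abbreviation below :: "'a \<Rightarrow> 'a \<Rightarrow> bool" (infix "\<preceq>" 50)
  where "a \<preceq> b \<equiv> a \<oplus> b = b"

abbreviation sq :: "'a \<Rightarrow> 'a"
  where "sq x \<equiv> x \<odot> x"

lemma below_trans: "a \<preceq> b \<Longrightarrow> b \<preceq> c \<Longrightarrow> a \<preceq> c"
  by (metis add_assoc)

lemma sq_idem: "sq (sq x) = sq x"
  by (metis mul_commute mul_square_left)

lemma sq_mul_sq: "sq x \<odot> sq y = x \<odot> y"
  by (metis mul_commute mul_square_left)

text \<open>\<open>None\<close> is an adjoined unit for \<open>\<odot>\<close>; \<open>monomial v {}\<close> is junk.\<close>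

definition monomial :: "(nat \<Rightarrow> 'a) \<Rightarrow> nat set \<Rightarrow> 'a" where
  "monomial v A = the (mprod.F (\<lambda>x. Some (sq (v x))) A)"

lemma mprod_monomial:
  assumes "finite A" and "A \<noteq> {}"
  shows "mprod.F (\<lambda>x. Some (sq (v x))) A = Some (monomial v A)"
proof -
  have "mprod.F (\<lambda>x. Some (sq (v x))) A \<noteq> None"
    using assms by (induction A rule: finite_ne_induct) auto
  then show ?thesis by (simp add: monomial_def)
qed

lemma monomial_singleton: "monomial v {x} = sq (v x)"
  by (simp add: monomial_def)

lemma monomial_union:
  assumes "finite A" "A \<noteq> {}" "finite B" "B \<noteq> {}"
  shows "monomial v (A \<union> B) = monomial v A \<odot> monomial v B"
proof -
  have "Some (monomial v (A \<union> B)) = option_mul (\<odot>) (Some (monomial v A)) (Some (monomial v B))"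
    using assms by (simp add: mprod_monomial[symmetric] mprod.union_idem sq_idem)
  then show ?thesis by simp
qed

lemma sq_monomial: "finite A \<Longrightarrow> A \<noteq> {} \<Longrightarrow> sq (monomial v A) = monomial v A"
  using monomial_union[of A A v] by simp

lemma monomial_antimono:
  assumes "finite A" and "B \<noteq> {}" and "B \<subseteq> A"
  shows "monomial v A \<preceq> monomial v B"
proof -
  have B: "finite B" "A \<noteq> {}"
    using assms finite_subset by auto
  have "sq (monomial v B) = sq (monomial v B) \<oplus> sq (monomial v B) \<odot> monomial v A"
    by (rule mul_absorb)
  then have "monomial v B = monomial v B \<oplus> monomial v (B \<union> A)"
    using B assms by (simp add: sq_monomial monomial_union)
  then show ?thesis
    using assms(3) by (simp add: Un_absorb1 add_commute)
qed

lemma add_below_iff: "a \<oplus> b \<preceq> c \<longleftrightarrow> a \<preceq> c \<and> b \<preceq> c"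
proof
  assume le: "a \<oplus> b \<preceq> c"
  have "a \<oplus> c = (a \<oplus> a \<oplus> b) \<oplus> c" and "b \<oplus> c = (b \<oplus> b \<oplus> a) \<oplus> c"
    using le by (metis add_assoc, metis add_assoc add_commute)
  then show "a \<preceq> c \<and> b \<preceq> c"
    using le by (simp add: add_idem add_commute)
qed (simp add: add_assoc)

lemma join_below_iff: "finite N \<Longrightarrow> N \<noteq> {} \<Longrightarrow> join.F N \<preceq> c \<longleftrightarrow> (\<forall>a\<in>N. a \<preceq> c)"
  by (induction N rule: finite_ne_induct) (simp_all add: add_below_iff)

lemma mul_join_right: "finite K \<Longrightarrow> K \<noteq> {} \<Longrightarrow> a \<odot> join.F K = join.F ((\<odot>) a ` K)"
  by (rule join.hom_commute) (simp_all add: distrib_left)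

lemma mul_join:
  assumes "finite N" "N \<noteq> {}" "finite K" "K \<noteq> {}"
  shows "join.F N \<odot> join.F K = join.F ((\<lambda>(a, b). a \<odot> b) ` (N \<times> K))"
  using assms(1,2)
proof (induction N rule: finite_ne_induct)
  case (singleton a)
  have "a \<odot> join.F K = join.F ((\<odot>) a ` K)"
    using assms(3,4) by (rule mul_join_right)
  moreover have "(\<lambda>(a, b). a \<odot> b) ` ({a} \<times> K) = (\<odot>) a ` K"
    by auto
  ultimately show ?case by simp
next
  case (insert a N)
  have "join.F (insert a N) \<odot> join.F K = a \<odot> join.F K \<oplus> join.F N \<odot> join.F K"
    using insert by (simp add: distrib_right)
  also have "\<dots> = join.F ((\<odot>) a ` K) \<oplus> join.F ((\<lambda>(a, b). a \<odot> b) ` (N \<times> K))"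
    using insert.IH mul_join_right[OF assms(3,4)] by simp
  also have "\<dots> = join.F ((\<odot>) a ` K \<union> (\<lambda>(a, b). a \<odot> b) ` (N \<times> K))"
    using insert assms(3,4) by (simp add: join.union)
  also have "(\<odot>) a ` K \<union> (\<lambda>(a, b). a \<odot> b) ` (N \<times> K) = (\<lambda>(a, b). a \<odot> b) ` (insert a N \<times> K)"
    by auto
  finally show ?case .
qed

definition summands :: "(nat \<Rightarrow> 'a) \<Rightarrow> trm \<Rightarrow> 'a set" where
  "summands v t = v ` linear_vars t \<union> monomial v ` monomials t"

lemma summands_finite_nonempty: "finite (summands v t) \<and> summands v t \<noteq> {}"
  using supports_finite_nonempty[of t] unfolding summands_def supports_eq
  by (auto simp: finite_linear_vars finite_monomials)

lemma sq_summands: "sq ` summands v t = monomial v ` supports t"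
proof -
  have "sq ` monomial v ` monomials t = monomial v ` monomials t"
    using monomials_finite_nonempty by (force simp: sq_monomial image_image)
  moreover have "sq ` v ` linear_vars t = monomial v ` (\<lambda>x. {x}) ` linear_vars t"
    by (simp add: image_image monomial_singleton)
  ultimately show ?thesis
    by (simp add: summands_def supports_eq image_Un Un_commute)
qed

lemma products_summands:
  "(\<lambda>(a, b). a \<odot> b) ` (summands v s \<times> summands v t) = summands v (Times s t)"
proof -
  have "(\<lambda>(a, b). a \<odot> b) ` (summands v s \<times> summands v t) =
      (\<lambda>(a, b). a \<odot> b) ` (sq ` summands v s \<times> sq ` summands v t)"
    by (simp add: image_split_Times_image sq_mul_sq)
  also have "\<dots> = (\<lambda>(A, B). monomial v A \<odot> monomial v B) ` (supports s \<times> supports t)"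
    by (simp add: sq_summands image_split_Times_image)
  also have "\<dots> = monomial v ` (\<lambda>(A, B). A \<union> B) ` (supports s \<times> supports t)"
    unfolding image_image using supports_finite_nonempty
    by (auto simp: monomial_union intro!: image_cong)
  finally show ?thesis
    by (simp add: summands_def)
qed

lemma eval_eq_join: "eval (\<oplus>) (\<odot>) v t = join.F (summands v t)"
proof (induction t)
  case (Var n)
  then show ?case by (simp add: summands_def)
next
  case (Plus s t)
  then show ?case
    using summands_finite_nonempty by (simp add: summands_def image_Un Un_ac join.union[symmetric])
next
  case (Times s t)
  then show ?case
    using summands_finite_nonempty by (simp add: mul_join products_summands)
qed

lemma eval_below_iff: "eval (\<oplus>) (\<odot>) v t \<preceq> c \<longleftrightarrow> (\<forall>a\<in>summands v t. a \<preceq> c)"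
  using summands_finite_nonempty by (simp add: eval_eq_join join_below_iff)

lemma nf_le_imp_eval_below:
  assumes "nf_le p q"
  shows "eval (\<oplus>) (\<odot>) v p \<preceq> eval (\<oplus>) (\<odot>) v q"
  unfolding eval_below_iff
proof
  fix a assume "a \<in> summands v p"
  have summand_below: "b \<preceq> eval (\<oplus>) (\<odot>) v q" if "b \<in> summands v q" for b
    using that summands_finite_nonempty by (simp add: eval_eq_join join.in_idem)
  from \<open>a \<in> summands v p\<close> consider x where "a = v x" "x \<in> linear_vars p"
    | A where "a = monomial v A" "A \<in> monomials p"
    unfolding summands_def by blast
  then show "a \<preceq> eval (\<oplus>) (\<odot>) v q"
  proof cases
    case 1
    then show ?thesis
      using assms by (intro summand_below) (auto simp: nf_le_def summands_def)
  next
    case 2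
    then obtain B where B: "B \<in> monomials q" "B \<subseteq> A"
      using assms by (auto simp: nf_le_def)
    then have "monomial v A \<preceq> monomial v B"
      using 2 monomials_finite_nonempty by (blast intro: monomial_antimono)
    moreover have "monomial v B \<preceq> eval (\<oplus>) (\<odot>) v q"
      using B by (intro summand_below) (simp add: summands_def)
    ultimately show ?thesis
      using 2 by (blast intro: below_trans)
  qed
qed

end

subsection \<open>The semiring S(4,474)\<close>

interpretation S: s474_semiring S_add S_mul
  by unfold_locales (auto simp: S_add_def S_mul_def)

lemma S_mul_simps:
  "S_mul E2 b = E2" "S_mul a E2 = E2" "a \<noteq> E2 \<Longrightarrow> b \<noteq> E2 \<Longrightarrow> S_mul a b = E3"
  by (simp_all add: S_mul_def)

lemma S_monomial:
  "finite A \<Longrightarrow> A \<noteq> {} \<Longrightarrow> S.monomial v A = (if \<exists>x\<in>A. v x = E2 then E2 else E3)"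
proof (induction A rule: finite_ne_induct)
  case (singleton x)
  show ?case
    by (cases "v x = E2") (simp_all add: S.monomial_singleton S_mul_simps)
next
  case (insert x A)
  have "S.monomial v (insert x A) = S_mul (S_mul (v x) (v x)) (S.monomial v A)"
    using S.monomial_union[of "{x}" A v] insert.hyps by (simp add: S.monomial_singleton)
  then show ?case
    unfolding insert.IH by (cases "v x = E2") (auto simp: S_mul_simps)
qed

lemma S_below_imp_linear_vars_subset:
  assumes below: "\<And>v. S_add (eval S_add S_mul v p) (eval S_add S_mul v q) = eval S_add S_mul v q"
  shows "linear_vars p \<subseteq> linear_vars q"
proof
  fix x assume x: "x \<in> linear_vars p"
  define v where "v y = (if y = x then E4 else E2)" for y
  show "x \<in> linear_vars q"
  proof (rule ccontr)
    assume "x \<notin> linear_vars q"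
    moreover have "\<forall>B\<in>monomials q. S.monomial v B \<in> {E2, E3}"
      using S_monomial monomials_finite_nonempty by simp
    ultimately have "\<forall>a\<in>S.summands v q. S_add a E3 = E3"
      by (auto simp: S.summands_def v_def S_add_def)
    then have "S_add (eval S_add S_mul v q) E3 = E3"
      by (simp add: S.eval_below_iff)
    then have "S_add (eval S_add S_mul v p) E3 = E3"
      using below[of v] by (rule S.below_trans[rotated])
    then have "S_add (v x) E3 = E3"
      using x by (simp add: S.eval_below_iff S.summands_def)
    then show False
      by (simp add: v_def S_add_def)
  qed
qed

lemma S_below_imp_monomials_refine:
  assumes below: "\<And>v. S_add (eval S_add S_mul v p) (eval S_add S_mul v q) = eval S_add S_mul v q"
    and A: "A \<in> monomials p"
  shows "\<exists>B\<in>monomials q. B \<subseteq> A"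
proof (rule ccontr)
  assume "\<not> (\<exists>B\<in>monomials q. B \<subseteq> A)"
  define v where "v y = (if y \<in> A then E4 else E2)" for y
  have "\<forall>B\<in>monomials q. S.monomial v B = E2"
    using \<open>\<not> (\<exists>B\<in>monomials q. B \<subseteq> A)\<close> S_monomial monomials_finite_nonempty
    by (force simp: v_def)
  then have "\<forall>a\<in>S.summands v q. S_add a E4 = E4"
    by (auto simp: S.summands_def v_def S_add_def)
  then have "S_add (eval S_add S_mul v q) E4 = E4"
    by (simp add: S.eval_below_iff)
  then have "S_add (eval S_add S_mul v p) E4 = E4"
    using below[of v] by (rule S.below_trans[rotated])
  then have "S_add (S.monomial v A) E4 = E4"
    using A by (simp add: S.eval_below_iff S.summands_def)
  moreover have "S.monomial v A = E3"
    using A S_monomial monomials_finite_nonempty by (simp add: v_def)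
  ultimately show False
    by (simp add: S_add_def)
qed

lemma S_below_imp_nf_le:
  assumes "\<And>v. S_add (eval S_add S_mul v p) (eval S_add S_mul v q) = eval S_add S_mul v q"
  shows "nf_le p q"
  using S_below_imp_linear_vars_subset[OF assms] S_below_imp_monomials_refine[OF assms]
  by (simp add: nf_le_def)

lemma (in s474_semiring) in_V_S: "in_V_S (\<oplus>) (\<odot>)"
  unfolding in_V_S_def satisfies_def
proof (intro allI impI)
  fix p q v
  assume "\<forall>v. eval S_add S_mul v p = eval S_add S_mul v q"
  then have "nf_le p q" and "nf_le q p"
    by (auto intro!: S_below_imp_nf_le simp: S.add_idem)
  then have "eval (\<oplus>) (\<odot>) v p \<preceq> eval (\<oplus>) (\<odot>) v q" and "eval (\<oplus>) (\<odot>) v q \<preceq> eval (\<oplus>) (\<odot>) v p"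
    by (simp_all add: nf_le_imp_eval_below)
  then show "eval (\<oplus>) (\<odot>) v p = eval (\<oplus>) (\<odot>) v q"
    by (simp add: add_commute)
qed

lemma in_V_S_imp_s474_semiring: "in_V_S add mul \<Longrightarrow> s474_semiring add mul"
  using S.s474_semiring_axioms unfolding s474_semiring_iff ai_semiring_iff_satisfies in_V_S_def
  by blast

theorem proposition7p1:
  fixes add mul :: "'a \<Rightarrow> 'a \<Rightarrow> 'a"
  shows "in_V_S add mul \<longleftrightarrow>
           ai_semiring add mul \<and>
           satisfies add mul (Times tx ty) (Times ty tx) \<and>
           satisfies add mul (Times (Times tx tx) ty) (Times tx ty) \<and>
           satisfies add mul (Times tx ty) (Plus (Times tx ty) (Times (Times tx ty) tz))"
  unfolding s474_semiring_iff[symmetric]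
  using in_V_S_imp_s474_semiring s474_semiring.in_V_S by blast

end
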